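(* Let $u(t,x)$ be a smooth function of $t$ and of $x\in S^1=\mathbb{R}/\mathbb{Z}\simeq[0,1)$, and consider the linear system $$\psi_{xxx}=-\lambda\, m\,\psi,\qquad \psi_t=-\tfrac{1}{\lambda}\psi_{xx}-u\psi_x+u_x\psi,$$ where $\lambda\in\mathbb{C}\setminus\{0\}$ is a spectral parameter and $\psi(t,x)$ is a scalar eigenfunction. (i) If $m=\mu(u)-u_{xx}$, then the compatibility condition $(\psi_t)_{xxx}=(\psi_{xxx})_t$ of this system is equivalent to $u$ satisfying the $\mu$DP equation $$\mu(u_t)-u_{txx}+3\mu(u)u_x-3u_xu_{xx}-uu_{xxx}=0.$$ (ii) If $m=-u_{xx}$, then the compatibility condition $(\psi_t)_{xxx}=(\psi_{xxx})_t$ is equivalent to $u$ satisfying the $\mu$B equation $$-u_{txx}-3u_xu_{xx}-uu_{xxx}=0.$$ Thus both the $\mu$DP and the $\mu$B equations admit this Lax pair formulation.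
   Context: Here $\mu(u)=\int_0^1 u\,dx$ denotes the mean of a periodic function. Both equations are instances of $Au_t+3u_xAu+uAu_x=0$, i.e. $m_t=-um_x-3u_xm$ with $m=Au$, where $A=\mu-\partial_x^2$ for $\mu$DP and $A=-\partial_x^2$ for $\mu$B. *)

theory Defs
  imports "HOL-Analysis.Analysis"
begin

text \<open>Functions of (t,x): first argument t (time), second argument x (space).\<close>

definition pdx :: "(real \<Rightarrow> real \<Rightarrow> real) \<Rightarrow> real \<Rightarrow> real \<Rightarrow> real" where
  "pdx f t x = deriv (\<lambda>y. f t y) x"

definition pdt :: "(real \<Rightarrow> real \<Rightarrow> real) \<Rightarrow> real \<Rightarrow> real \<Rightarrow> real" where
  "pdt f t x = deriv (\<lambda>s. f s x) t"

primrec iter_partial :: "bool list \<Rightarrow> (real \<Rightarrow> real \<Rightarrow> real) \<Rightarrow> real \<Rightarrow> real \<Rightarrow> real" where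
  "iter_partial [] f = f"
| "iter_partial (b # bs) f = (if b then pdt else pdx) (iter_partial bs f)"

definition smooth2 :: "(real \<Rightarrow> real \<Rightarrow> real) \<Rightarrow> bool" where
  "smooth2 f \<longleftrightarrow> (\<forall>bs. continuous_on UNIV (\<lambda>p. iter_partial bs f (fst p) (snd p)) \<and>
      (\<forall>t x. (\<lambda>y. iter_partial bs f t y) differentiable (at x) \<and>
             (\<lambda>s. iter_partial bs f s x) differentiable (at t)))"

text \<open>Functions on S^1 = R/Z, viewed as 1-periodic functions of x.\<close>
definition periodic_x :: "(real \<Rightarrow> real \<Rightarrow> real) \<Rightarrow> bool" where
  "periodic_x f \<longleftrightarrow> (\<forall>t x. f t (x + 1) = f t x)"

definition mean :: "(real \<Rightarrow> real \<Rightarrow> real) \<Rightarrow> real \<Rightarrow> real" where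
  "mean f t = integral {0..1} (\<lambda>x. f t x)"

definition cderiv :: "(real \<Rightarrow> complex) \<Rightarrow> real \<Rightarrow> complex" where
  "cderiv g x = vector_derivative g (at x)"

definition smooth_c :: "(real \<Rightarrow> complex) \<Rightarrow> bool" where
  "smooth_c g \<longleftrightarrow> (\<forall>k x. (cderiv ^^ k) g differentiable (at x))"

definition Vop :: "(real \<Rightarrow> real \<Rightarrow> real) \<Rightarrow> complex \<Rightarrow> real \<Rightarrow> (real \<Rightarrow> complex) \<Rightarrow> real \<Rightarrow> complex" where
  "Vop u lam t \<psi> x = - (1 / lam) * cderiv (cderiv \<psi>) x - of_real (u t x) * cderiv \<psi> x
                      + of_real (pdx u t x) * \<psi> x"

text \<open>Compatibility condition (psi_t)_xxx = (psi_xxx)_t of the system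
  psi_xxx = -lambda m psi, psi_t = Vop u lambda t psi, for every spectral parameter
  lambda <> 0: for every time t and every (smooth) solution psi of the x-equation at
  time t, computing (psi_t)_xxx with psi_t := V psi agrees with
  (psi_xxx)_t = (-lambda m psi)_t = -lambda m_t psi - lambda m psi_t, psi_t := V psi.\<close>
definition lax_compatible :: "(real \<Rightarrow> real \<Rightarrow> real) \<Rightarrow> (real \<Rightarrow> real \<Rightarrow> real) \<Rightarrow> bool" where
  "lax_compatible u m \<longleftrightarrow>
    (\<forall>lam::complex. lam \<noteq> 0 \<longrightarrow>
      (\<forall>t \<psi>. smooth_c \<psi> \<and> (\<forall>x. (cderiv ^^ 3) \<psi> x = - lam * of_real (m t x) * \<psi> x) \<longrightarrow>
        (\<forall>x. (cderiv ^^ 3) (Vop u lam t \<psi>) x =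
              - lam * of_real (pdt m t x) * \<psi> x - lam * of_real (m t x) * Vop u lam t \<psi> x)))"

end

theory Submission
  imports Defs
begin

text \<open>
  For every \<open>\<lambda> \<noteq> 0\<close> and every solution \<open>\<psi>\<close> of \<open>\<psi>\<^sub>x\<^sub>x\<^sub>x = -\<lambda> m \<psi>\<close>, a direct computation
  using only \<open>m\<^sub>x = -u\<^sub>x\<^sub>x\<^sub>x\<close> gives
  \<open>(V\<psi>)\<^sub>x\<^sub>x\<^sub>x - (-\<lambda> m\<^sub>t \<psi> - \<lambda> m V\<psi>) = \<lambda> (m\<^sub>t + u m\<^sub>x + 3 u\<^sub>x m) \<psi>\<close>, where \<open>V\<psi>\<close> is the
  right-hand side of the time equation. So the equation \<open>m\<^sub>t + u m\<^sub>x + 3 u\<^sub>x m = 0\<close>, which is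
  the \<open>\<mu>\<close>DP resp. \<open>\<mu>\<close>B equation for \<open>m = \<mu>(u) - u\<^sub>x\<^sub>x\<close> resp. \<open>m = -u\<^sub>x\<^sub>x\<close>, implies compatibility.
  Conversely, compatibility forces the equation at any point \<open>x\<^sub>0\<close> once there is a smooth
  eigenfunction with \<open>\<psi>(x\<^sub>0) = 1\<close>. Such a solution exists globally because \<open>m\<close> is continuous
  and, by periodicity, bounded: the linear first-order system for \<open>(\<psi>, \<psi>\<^sub>x, \<psi>\<^sub>x\<^sub>x)\<close> is then
  globally Lipschitz, and Picard's integral operator is a contraction for a Bielecki-weighted
  sup norm.
\<close>

definition signed_integral :: "real \<Rightarrow> real \<Rightarrow> (real \<Rightarrow> 'a::banach) \<Rightarrow> 'a" where
  "signed_integral a b g = integral {a..b} g - integral {b..a} g"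

lemma signed_integral_same [simp]: "signed_integral a a g = 0"
  by (simp add: signed_integral_def)

lemma signed_integral_eq_integral_diff:
  fixes g :: "real \<Rightarrow> 'a::banach"
  assumes "continuous_on UNIV g" "c \<le> a" "c \<le> b"
  shows "signed_integral a b g = integral {c..b} g - integral {c..a} g"
proof (cases "a \<le> b")
  case True
  have "integral {c..a} g + integral {a..b} g = integral {c..b} g"
    using assms True
    by (intro Henstock_Kurzweil_Integration.integral_combine integrable_continuous_real continuous_on_subset[OF assms(1)]) auto
  moreover have "integral {b..a} g = 0"
    using True by (cases "a = b") auto
  ultimately show ?thesis
    unfolding signed_integral_def by (metis add_diff_cancel_left' diff_zero)
next
  case False
  have "integral {c..b} g + integral {b..a} g = integral {c..a} g"
    using assms False
    by (intro Henstock_Kurzweil_Integration.integral_combine integrable_continuous_real continuous_on_subset[OF assms(1)]) auto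
  moreover have "integral {a..b} g = 0"
    using False by simp
  ultimately show ?thesis
    unfolding signed_integral_def by (metis add_diff_cancel_left' minus_diff_eq diff_zero)
qed

lemma signed_integral_has_vector_derivative:
  fixes g :: "real \<Rightarrow> 'a::banach"
  assumes "continuous_on UNIV g"
  shows "((\<lambda>x. signed_integral a x g) has_vector_derivative g x) (at x)"
proof -
  define c where "c = min a x - 1"
  have "((\<lambda>y. integral {c..y} g) has_vector_derivative g x) (at x within {c..x+1})"
    using assms by (intro integral_has_vector_derivative) (auto simp: c_def intro: continuous_on_subset)
  then have "((\<lambda>y. integral {c..y} g) has_vector_derivative g x) (at x)"
    by (subst (asm) at_within_interior) (auto simp: c_def)
  then have "((\<lambda>y. integral {c..y} g - integral {c..a} g) has_vector_derivative g x) (at x)"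
    by (auto intro!: derivative_eq_intros)
  then show ?thesis
    by (rule has_vector_derivative_transform_within_open[where S="{c<..}"])
       (auto simp: c_def intro!: signed_integral_eq_integral_diff[OF assms, symmetric])
qed

lemma continuous_on_signed_integral:
  fixes g :: "real \<Rightarrow> 'a::banach"
  assumes "continuous_on UNIV g"
  shows "continuous_on UNIV (\<lambda>x. signed_integral a x g)"
  using signed_integral_has_vector_derivative[OF assms] has_vector_derivative_continuous
  by (metis continuous_at_imp_continuous_on)

lemma signed_integral_diff:
  fixes g h :: "real \<Rightarrow> 'a::banach"
  assumes "continuous_on UNIV g" "continuous_on UNIV h"
  shows "signed_integral a b (\<lambda>s. g s - h s) = signed_integral a b g - signed_integral a b h"
  unfolding signed_integral_def using assms
  by (subst integral_diff, auto intro: integrable_continuous_real continuous_on_subset)+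

lemma norm_signed_integral_le_exp:
  fixes g :: "real \<Rightarrow> 'a::banach"
  assumes "continuous_on UNIV g" "\<And>s. norm (g s) \<le> K * exp (L * \<bar>s - a\<bar>)" "L > 0"
  shows "norm (signed_integral a b g) \<le> K * (exp (L * \<bar>b - a\<bar>) - 1) / L"
proof -
  have int_g: "g integrable_on {c..d}" for c d
    using assms(1) by (auto intro: integrable_continuous_real continuous_on_subset)
  have int_exp: "(\<lambda>s. K * exp (L * \<bar>s - a\<bar>)) integrable_on {c..d}" for c d
    by (intro integrable_continuous_real continuous_intros)
  show ?thesis
  proof (cases "a \<le> b")
    case True
    have "((\<lambda>s. K * exp (L * (s - a))) has_integral (K/L * exp (L*(b-a)) - K/L * exp (L*(a-a)))) {a..b}"
      using True \<open>L>0\<close>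
      by (intro fundamental_theorem_of_calculus)
         (auto intro!: derivative_eq_intros simp: has_real_derivative_iff_has_vector_derivative[symmetric])
    then have "((\<lambda>s. K * exp (L * \<bar>s - a\<bar>)) has_integral K * (exp (L * \<bar>b - a\<bar>) - 1) / L) {a..b}"
      by (rule has_integral_eq_rhs[OF has_integral_eq[rotated]]) (use True \<open>L > 0\<close> in \<open>auto simp: field_simps\<close>)
    moreover have "norm (signed_integral a b g) = norm (integral {a..b} g)"
      using True by (cases "a = b") (auto simp: signed_integral_def)
    ultimately show ?thesis
      using integral_norm_bound_integral[OF int_g int_exp assms(2)] integral_unique by metis
  next
    case False
    have "((\<lambda>s. K * exp (L * (a - s))) has_integral (- K/L * exp (L*(a-a)) - (- K/L * exp (L*(a-b))))) {b..a}"
      using False \<open>L>0\<close>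
      by (intro fundamental_theorem_of_calculus)
         (auto intro!: derivative_eq_intros simp: has_real_derivative_iff_has_vector_derivative[symmetric])
    then have "((\<lambda>s. K * exp (L * \<bar>s - a\<bar>)) has_integral K * (exp (L * \<bar>b - a\<bar>) - 1) / L) {b..a}"
      by (rule has_integral_eq_rhs[OF has_integral_eq[rotated]]) (use False \<open>L > 0\<close> in \<open>auto simp: field_simps\<close>)
    moreover have "norm (signed_integral a b g) = norm (integral {b..a} g)"
      using False by (auto simp: signed_integral_def)
    ultimately show ?thesis
      using integral_norm_bound_integral[OF int_g int_exp assms(2)] integral_unique by metis
  qed
qed

lemma exp_weighted_norm_signed_integral_le:
  fixes h :: "real \<Rightarrow> 'a::banach"
  assumes "continuous_on UNIV h" "\<And>s. norm (h s) \<le> c * exp (L * \<bar>s - a\<bar>)" "L > 0"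
  shows "exp (- (L * \<bar>x - a\<bar>)) * norm (signed_integral a x h) \<le> c / L"
proof -
  have "norm (h a) \<le> c" using assms(2)[of a] by simp
  then have "0 \<le> c" by (rule order_trans[OF norm_ge_zero])
  have "exp (- (L * \<bar>x - a\<bar>)) * norm (signed_integral a x h)
      \<le> exp (- (L * \<bar>x - a\<bar>)) * (c * (exp (L * \<bar>x - a\<bar>) - 1) / L)"
    by (intro mult_left_mono norm_signed_integral_le_exp assms) auto
  also have "\<dots> = c / L * (1 - exp (- (L * \<bar>x - a\<bar>)))"
    using \<open>L > 0\<close> by (simp add: field_simps exp_minus)
  also have "\<dots> \<le> c / L"
    using \<open>0 \<le> c\<close> \<open>L > 0\<close> by (intro mult_left_le) auto
  finally show ?thesis .
qed

text \<open>The Picard map conjugated by the weight \<open>exp (L \<bar>x - x0\<bar>)\<close>: if \<open>\<phi>\<close> is a fixed point,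
  then \<open>exp (L \<bar>x - x0\<bar>) \<phi> x\<close> solves the integral equation.\<close>

definition bielecki_picard ::
    "(real \<Rightarrow> 'a::banach \<Rightarrow> 'a) \<Rightarrow> real \<Rightarrow> 'a \<Rightarrow> real \<Rightarrow> (real \<Rightarrow> 'a) \<Rightarrow> real \<Rightarrow> 'a" where
  "bielecki_picard g L Y0 x0 \<phi> x = exp (- (L * \<bar>x - x0\<bar>)) *\<^sub>R
     (Y0 + signed_integral x0 x (\<lambda>s. g s (exp (L * \<bar>s - x0\<bar>) *\<^sub>R \<phi> s)))"

context
  fixes g :: "real \<Rightarrow> 'a::banach \<Rightarrow> 'a" and C K :: real
  assumes cont: "continuous_on UNIV (\<lambda>p. g (fst p) (snd p))"
    and lip: "\<And>s. C-lipschitz_on UNIV (g s)"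
    and bnd: "\<And>s. norm (g s 0) \<le> K"
begin

lemma continuous_on_apply_param: "continuous_on UNIV Y \<Longrightarrow> continuous_on UNIV (\<lambda>s. g s (Y s))"
proof -
  assume "continuous_on UNIV Y"
  then have "continuous_on UNIV (\<lambda>s. (s, Y s))" by (intro continuous_intros)
  from continuous_on_compose2[OF cont this] show ?thesis by simp
qed

lemma continuous_on_bielecki_integrand:
  "continuous_on UNIV (\<lambda>s. g s (exp (L * \<bar>s - x0\<bar>) *\<^sub>R apply_bcontfun \<phi> s))"
  by (intro continuous_on_apply_param continuous_intros) auto

lemma norm_bielecki_integrand_le:
  assumes "L > 0"
  shows "norm (g s (exp (L * \<bar>s - x0\<bar>) *\<^sub>R apply_bcontfun \<phi> s))
    \<le> (K + C * norm \<phi>) * exp (L * \<bar>s - x0\<bar>)"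
proof -
  let ?w = "exp (L * \<bar>s - x0\<bar>)"
  have "0 \<le> K" using bnd[of s] by (rule order_trans[OF norm_ge_zero])
  have "0 \<le> C" using lip lipschitz_on_nonneg by blast
  have "1 \<le> ?w" using \<open>L > 0\<close> by simp
  have "norm (g s (?w *\<^sub>R apply_bcontfun \<phi> s))
      \<le> norm (g s 0) + norm (g s (?w *\<^sub>R apply_bcontfun \<phi> s) - g s 0)"
    by (rule norm_triangle_sub)
  also have "\<dots> \<le> K + C * norm (?w *\<^sub>R apply_bcontfun \<phi> s)"
    using bnd lipschitz_on_normD[OF lip, of "?w *\<^sub>R apply_bcontfun \<phi> s" 0 s]
    by (intro add_mono) auto
  also have "\<dots> \<le> K * ?w + C * (?w * norm \<phi>)"
    using \<open>0 \<le> K\<close> \<open>0 \<le> C\<close> \<open>1 \<le> ?w\<close> norm_bounded[of \<phi> s]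
    by (intro add_mono mult_left_mono) (auto simp: mult_le_cancel_left1)
  finally show ?thesis by (simp add: algebra_simps)
qed

lemma bielecki_picard_bcontfun:
  assumes "L > 0"
  shows "bielecki_picard g L Y0 x0 (apply_bcontfun \<phi>) \<in> bcontfun"
proof (rule bcontfun_normI)
  show "continuous_on UNIV (bielecki_picard g L Y0 x0 (apply_bcontfun \<phi>))"
    unfolding bielecki_picard_def[abs_def]
    by (intro continuous_intros continuous_on_signed_integral continuous_on_bielecki_integrand)
  fix x
  let ?S = "signed_integral x0 x (\<lambda>s. g s (exp (L * \<bar>s - x0\<bar>) *\<^sub>R apply_bcontfun \<phi> s))"
  have "norm (bielecki_picard g L Y0 x0 (apply_bcontfun \<phi>) x)
      \<le> exp (- (L * \<bar>x - x0\<bar>)) * norm Y0 + exp (- (L * \<bar>x - x0\<bar>)) * norm ?S"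
    unfolding bielecki_picard_def distrib_left[symmetric]
    by (simp add: mult_left_mono norm_triangle_ineq)
  also have "\<dots> \<le> norm Y0 + (K + C * norm \<phi>) / L"
    using norm_bielecki_integrand_le \<open>L > 0\<close>
    by (intro add_mono mult_left_le_one_le exp_weighted_norm_signed_integral_le
        continuous_on_bielecki_integrand) auto
  finally show "norm (bielecki_picard g L Y0 x0 (apply_bcontfun \<phi>) x)
      \<le> norm Y0 + (K + C * norm \<phi>) / L" .
qed

lemma dist_bielecki_picard_le:
  assumes "L > 0"
  shows "dist (bielecki_picard g L Y0 x0 (apply_bcontfun \<phi>) x) (bielecki_picard g L Y0 x0 (apply_bcontfun \<psi>) x)
    \<le> C / L * dist \<phi> \<psi>"
proof -
  define h where "h s = g s (exp (L * \<bar>s - x0\<bar>) *\<^sub>R apply_bcontfun \<phi> s)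
    - g s (exp (L * \<bar>s - x0\<bar>) *\<^sub>R apply_bcontfun \<psi> s)" for s
  have "0 \<le> C" using lip lipschitz_on_nonneg by blast
  have "norm (h s) \<le> C * norm (exp (L * \<bar>s - x0\<bar>) *\<^sub>R (apply_bcontfun \<phi> s - apply_bcontfun \<psi> s))"
    for s unfolding h_def scaleR_diff_right by (rule lipschitz_on_normD[OF lip]) auto
  also have "\<dots> s \<le> (C * dist \<phi> \<psi>) * exp (L * \<bar>s - x0\<bar>)" for s
  proof -
    have "norm (apply_bcontfun \<phi> s - apply_bcontfun \<psi> s) \<le> dist \<phi> \<psi>"
      using dist_bounded[of \<phi> s \<psi>] by (simp add: dist_norm)
    then have "C * (exp (L * \<bar>s - x0\<bar>) * norm (apply_bcontfun \<phi> s - apply_bcontfun \<psi> s))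
        \<le> C * (exp (L * \<bar>s - x0\<bar>) * dist \<phi> \<psi>)"
      using \<open>0 \<le> C\<close> by (intro mult_left_mono) auto
    then show ?thesis by (simp add: mult_ac)
  qed
  finally have "norm (h s) \<le> (C * dist \<phi> \<psi>) * exp (L * \<bar>s - x0\<bar>)" for s .
  moreover have "continuous_on UNIV h"
    unfolding h_def by (intro continuous_intros continuous_on_bielecki_integrand)
  ultimately have bound: "exp (- (L * \<bar>x - x0\<bar>)) * norm (signed_integral x0 x h) \<le> C * dist \<phi> \<psi> / L"
    using \<open>L > 0\<close> by (intro exp_weighted_norm_signed_integral_le)
  have "signed_integral x0 x h
      = signed_integral x0 x (\<lambda>s. g s (exp (L * \<bar>s - x0\<bar>) *\<^sub>R apply_bcontfun \<phi> s))
      - signed_integral x0 x (\<lambda>s. g s (exp (L * \<bar>s - x0\<bar>) *\<^sub>R apply_bcontfun \<psi> s))"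
    unfolding h_def by (intro signed_integral_diff continuous_on_bielecki_integrand)
  then have "bielecki_picard g L Y0 x0 (apply_bcontfun \<phi>) x
      - bielecki_picard g L Y0 x0 (apply_bcontfun \<psi>) x
      = exp (- (L * \<bar>x - x0\<bar>)) *\<^sub>R signed_integral x0 x h"
    by (simp add: bielecki_picard_def scaleR_add_right scaleR_diff_right)
  with bound show ?thesis by (simp add: dist_norm)
qed

lemma integral_equation_global_solution:
  "\<exists>Y. continuous_on UNIV Y \<and> (\<forall>x. Y x = Y0 + signed_integral x0 x (\<lambda>s. g s (Y s)))"
proof -
  have "0 \<le> C" using lip lipschitz_on_nonneg by blast
  define L where "L = 2 * C + 1"
  have "L > 0" using \<open>0 \<le> C\<close> by (simp add: L_def)
  define T where "T \<phi> = Bcontfun (bielecki_picard g L Y0 x0 (apply_bcontfun \<phi>))" for \<phi>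
  have apply_T: "apply_bcontfun (T \<phi>) = bielecki_picard g L Y0 x0 (apply_bcontfun \<phi>)" for \<phi>
    unfolding T_def using bielecki_picard_bcontfun[OF \<open>L > 0\<close>] by (simp add: Bcontfun_inverse)
  have "C / L \<le> 1/2" using \<open>0 \<le> C\<close> by (simp add: L_def field_simps)
  have "dist (T \<phi> x) (T \<psi> x) \<le> 1/2 * dist \<phi> \<psi>" for \<phi> \<psi> x
  proof -
    have "dist (T \<phi> x) (T \<psi> x) \<le> C / L * dist \<phi> \<psi>"
      unfolding apply_T by (rule dist_bielecki_picard_le[OF \<open>L > 0\<close>])
    also have "\<dots> \<le> 1/2 * dist \<phi> \<psi>"
      by (rule mult_right_mono[OF \<open>C / L \<le> 1/2\<close> zero_le_dist])
    finally show ?thesis .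
  qed
  then have contraction: "dist (T \<phi>) (T \<psi>) \<le> 1/2 * dist \<phi> \<psi>" for \<phi> \<psi>
    by (intro dist_bound)
  have "\<exists>!\<phi>. T \<phi> = \<phi>"
    by (rule banach_fix_type[of "1/2"]) (use contraction in auto)
  then obtain \<phi> where "T \<phi> = \<phi>" by blast
  define Y where "Y x = exp (L * \<bar>x - x0\<bar>) *\<^sub>R apply_bcontfun \<phi> x" for x
  have "Y x = Y0 + signed_integral x0 x (\<lambda>s. g s (Y s))" for x
  proof -
    have "apply_bcontfun \<phi> x = bielecki_picard g L Y0 x0 (apply_bcontfun \<phi>) x"
      using apply_T[of \<phi>] \<open>T \<phi> = \<phi>\<close> by simp
    then show ?thesis by (simp add: Y_def bielecki_picard_def exp_minus)
  qed
  moreover have "continuous_on UNIV Y"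
  proof -
    have "continuous_on UNIV (\<lambda>x. exp (L * \<bar>x - x0\<bar>))" by (intro continuous_intros)
    then show ?thesis
      unfolding Y_def by (intro continuous_on_scaleR continuous_on_apply_bcontfun)
  qed
  ultimately show ?thesis by blast
qed

end

definition companion3 ::
    "(real \<Rightarrow> real) \<Rightarrow> real \<Rightarrow> real \<times> real \<times> real \<Rightarrow> real \<times> real \<times> real" where
  "companion3 f s = (\<lambda>(a, b, c). (b, c, f s * a))"

lemma companion3_diff: "companion3 f s Y - companion3 f s Z = companion3 f s (Y - Z)"
  by (cases Y; cases Z) (simp add: companion3_def right_diff_distrib)

lemma norm_companion3_le: "norm (companion3 f s Y) \<le> (1 + \<bar>f s\<bar>) * norm Y"
proof -
  obtain a b c where Y: "Y = (a, b, c)" by (cases Y) auto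
  have "norm (companion3 f s Y) \<le> norm (b, c, 0::real) + norm (0::real, 0::real, f s * a)"
    using norm_triangle_ineq[of "(b, c, 0::real)" "(0::real, 0::real, f s * a)"]
    by (simp add: Y companion3_def)
  also have "norm (b, c, 0::real) \<le> norm Y"
    by (simp add: Y norm_Pair)
  also have "norm (0::real, 0::real, f s * a) \<le> \<bar>f s\<bar> * norm Y"
  proof -
    have "\<bar>a\<bar> \<le> norm Y" using norm_fst_le[of a "(b, c)"] by (simp add: Y)
    then show ?thesis by (simp add: norm_Pair abs_mult mult_left_mono)
  qed
  finally show ?thesis by (simp add: algebra_simps)
qed

lemma has_vector_derivative_fst:
  "(Y has_vector_derivative v) (at x) \<Longrightarrow> ((\<lambda>x. fst (Y x)) has_vector_derivative fst v) (at x)"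
  unfolding has_vector_derivative_def by (drule has_derivative_fst) simp

lemma has_vector_derivative_snd:
  "(Y has_vector_derivative v) (at x) \<Longrightarrow> ((\<lambda>x. snd (Y x)) has_vector_derivative snd v) (at x)"
  unfolding has_vector_derivative_def by (drule has_derivative_snd) simp

lemma third_order_linear_ode_solution:
  fixes f :: "real \<Rightarrow> real"
  assumes cont: "continuous_on UNIV f" and bounded: "\<And>s. \<bar>f s\<bar> \<le> B"
  obtains p0 p1 p2 where "\<And>x. (p0 has_real_derivative p1 x) (at x)"
    "\<And>x. (p1 has_real_derivative p2 x) (at x)"
    "\<And>x. (p2 has_real_derivative f x * p0 x) (at x)" "p0 a = 1"
proof -
  have lip: "(1 + B)-lipschitz_on UNIV (companion3 f s)" for s
  proof (rule lipschitz_onI)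
    show "dist (companion3 f s Y) (companion3 f s Z) \<le> (1 + B) * dist Y Z" for Y Z
      using norm_companion3_le[of f s "Y - Z"] bounded[of s]
        mult_right_mono[of "1 + \<bar>f s\<bar>" "1 + B" "norm (Y - Z)"]
      by (simp add: dist_norm companion3_diff)
    show "0 \<le> 1 + B" using bounded[of 0] by linarith
  qed
  have "continuous_on UNIV (\<lambda>p::real \<times> real \<times> real \<times> real. f (fst p))"
    by (rule continuous_on_compose2[OF cont continuous_on_fst[OF continuous_on_id]]) auto
  then have cont_companion: "continuous_on UNIV (\<lambda>p. companion3 f (fst p) (snd p))"
    unfolding companion3_def split_beta by (intro continuous_intros)
  have "\<exists>Y. continuous_on UNIV Y \<and>
      (\<forall>x. Y x = (1, 0, 0) + signed_integral a x (\<lambda>s. companion3 f s (Y s)))"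
    by (rule integral_equation_global_solution[OF cont_companion lip, where K=0])
      (simp add: companion3_def zero_prod_def)
  then obtain Y where cont_Y: "continuous_on UNIV Y"
    and Y: "\<And>x. Y x = (1, 0, 0) + signed_integral a x (\<lambda>s. companion3 f s (Y s))"
    by blast
  have "continuous_on UNIV (\<lambda>s. (s, Y s))" using cont_Y by (intro continuous_intros)
  from continuous_on_compose2[OF cont_companion this]
  have "continuous_on UNIV (\<lambda>s. companion3 f s (Y s))" by simp
  then have "((\<lambda>x. (1, 0, 0) + signed_integral a x (\<lambda>s. companion3 f s (Y s)))
      has_vector_derivative companion3 f x (Y x)) (at x)" for x
    by (auto intro!: derivative_eq_intros signed_integral_has_vector_derivative)
  then have "(Y has_vector_derivative companion3 f x (Y x)) (at x)" for x
    by (rule has_vector_derivative_transform_within_open[OF _ open_UNIV UNIV_I]) (rule Y[symmetric])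
  then have Y': "(Y has_vector_derivative (fst (snd (Y x)), snd (snd (Y x)), f x * fst (Y x))) (at x)"
    for x
    by (simp add: companion3_def split_beta)
  show ?thesis
  proof (rule that)
    show "((\<lambda>x. fst (Y x)) has_real_derivative fst (snd (Y x))) (at x)" for x
      using has_vector_derivative_fst[OF Y'[of x]]
      by (simp add: has_real_derivative_iff_has_vector_derivative)
    show "((\<lambda>x. fst (snd (Y x))) has_real_derivative snd (snd (Y x))) (at x)" for x
      using has_vector_derivative_fst[OF has_vector_derivative_snd[OF Y'[of x]]]
      by (simp add: has_real_derivative_iff_has_vector_derivative)
    show "((\<lambda>x. snd (snd (Y x))) has_real_derivative f x * fst (Y x)) (at x)" for x
      using has_vector_derivative_snd[OF has_vector_derivative_snd[OF Y'[of x]]]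
      by (simp add: has_real_derivative_iff_has_vector_derivative)
    show "fst (Y a) = 1" using Y[of a] by simp
  qed
qed

fun differentiable_upto :: "nat \<Rightarrow> (real \<Rightarrow> real) \<Rightarrow> bool" where
  "differentiable_upto 0 g \<longleftrightarrow> (\<forall>x. g differentiable (at x))"
| "differentiable_upto (Suc k) g \<longleftrightarrow> (\<forall>x. g differentiable (at x)) \<and> differentiable_upto k (deriv g)"

definition smooth_real :: "(real \<Rightarrow> real) \<Rightarrow> bool" where
  "smooth_real g \<longleftrightarrow> (\<forall>k. differentiable_upto k g)"

lemma differentiable_upto_differentiable: "differentiable_upto k g \<Longrightarrow> g differentiable (at x)"
  by (cases k) auto

lemma differentiable_upto_Suc_imp: "differentiable_upto (Suc k) g \<Longrightarrow> differentiable_upto k g"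
  by (induction k arbitrary: g) auto

lemma smooth_real_differentiable: "smooth_real g \<Longrightarrow> g differentiable (at x)"
  unfolding smooth_real_def using differentiable_upto_differentiable by blast

lemma smooth_real_has_derivative: "smooth_real g \<Longrightarrow> (g has_real_derivative deriv g x) (at x)"
  using smooth_real_differentiable DERIV_deriv_iff_real_differentiable by blast

lemma smooth_real_deriv: "smooth_real g \<Longrightarrow> smooth_real (deriv g)"
  unfolding smooth_real_def by (metis differentiable_upto.simps(2))

lemma smooth_real_continuous_on: "smooth_real g \<Longrightarrow> continuous_on S g"
  by (meson continuous_at_imp_continuous_on differentiable_imp_continuous_within
      smooth_real_differentiable)

lemma differentiable_upto_add:
  "differentiable_upto k g \<Longrightarrow> differentiable_upto k h \<Longrightarrow> differentiable_upto k (\<lambda>x. g x + h x)"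
proof (induction k arbitrary: g h)
  case (Suc k)
  have "deriv (\<lambda>x. g x + h x) = (\<lambda>x. deriv g x + deriv h x)"
    using Suc.prems
    by (intro ext DERIV_imp_deriv DERIV_add) (auto simp: DERIV_deriv_iff_real_differentiable)
  with Suc show ?case by auto
qed auto

lemma differentiable_upto_mult:
  "differentiable_upto k g \<Longrightarrow> differentiable_upto k h \<Longrightarrow> differentiable_upto k (\<lambda>x. g x * h x)"
proof (induction k arbitrary: g h)
  case (Suc k)
  have "deriv (\<lambda>x. g x * h x) = (\<lambda>x. deriv g x * h x + g x * deriv h x)"
    using Suc.prems
    by (intro ext DERIV_imp_deriv)
       (auto intro!: derivative_eq_intros DERIV_deriv_iff_real_differentiable[THEN iffD2]
         simp: algebra_simps)
  moreover have "differentiable_upto k g" "differentiable_upto k h"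
    using Suc.prems by (auto intro: differentiable_upto_Suc_imp)
  ultimately show ?case
    using Suc by (auto intro!: differentiable_upto_add Suc.IH)
qed auto

lemma differentiable_upto_const: "differentiable_upto k (\<lambda>x. c)"
  by (induction k arbitrary: c) auto

lemma smooth_real_add: "smooth_real g \<Longrightarrow> smooth_real h \<Longrightarrow> smooth_real (\<lambda>x. g x + h x)"
  unfolding smooth_real_def using differentiable_upto_add by blast

lemma smooth_real_mult: "smooth_real g \<Longrightarrow> smooth_real h \<Longrightarrow> smooth_real (\<lambda>x. g x * h x)"
  unfolding smooth_real_def using differentiable_upto_mult by blast

lemma smooth_real_const: "smooth_real (\<lambda>x. c)"
  unfolding smooth_real_def using differentiable_upto_const by blast

lemma smooth_real_diff: "smooth_real g \<Longrightarrow> smooth_real h \<Longrightarrow> smooth_real (\<lambda>x. g x - h x)"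
  using smooth_real_add[OF _ smooth_real_mult[OF smooth_real_const, of h "-1"], of g] by simp

lemma smooth_real_funpow_deriv: "smooth_real g \<Longrightarrow> smooth_real ((deriv ^^ k) g)"
  by (induction k) (auto intro: smooth_real_deriv)

lemma cderiv_funpow_of_real:
  assumes "smooth_real g"
  shows "(cderiv ^^ k) (\<lambda>x. complex_of_real (g x)) = (\<lambda>x. of_real ((deriv ^^ k) g x))"
  using assms
proof (induction k arbitrary: g)
  case (Suc k)
  have "cderiv (\<lambda>x. complex_of_real (g x)) = (\<lambda>x. of_real (deriv g x))"
    unfolding cderiv_def
    by (intro ext vector_derivative_of_real_left smooth_real_differentiable Suc.prems)
  then have "(cderiv ^^ Suc k) (\<lambda>x. complex_of_real (g x))
      = (cderiv ^^ k) (\<lambda>x. complex_of_real (deriv g x))"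
    by (simp only: funpow_Suc_right o_apply)
  also have "\<dots> = (\<lambda>x. of_real ((deriv ^^ k) (deriv g) x))"
    by (rule Suc.IH[OF smooth_real_deriv[OF Suc.prems]])
  finally show ?case by (simp only: funpow_Suc_right o_apply)
qed simp

lemma smooth_c_of_real: "smooth_real g \<Longrightarrow> smooth_c (\<lambda>x. complex_of_real (g x))"
  unfolding smooth_c_def cderiv_funpow_of_real
  by (auto intro!: differentiableI_vector has_vector_derivative_of_real
      smooth_real_has_derivative smooth_real_funpow_deriv)

lemma third_order_solution_smooth:
  fixes f p0 p1 p2 :: "real \<Rightarrow> real"
  assumes "smooth_real f"
    and "\<And>x. (p0 has_real_derivative p1 x) (at x)"
    and "\<And>x. (p1 has_real_derivative p2 x) (at x)"
    and "\<And>x. (p2 has_real_derivative f x * p0 x) (at x)"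
  shows "smooth_real p0"
proof -
  \<comment> \<open>Differentiating a combination of \<open>p0, p1, p2\<close> with smooth coefficients gives another such
     combination, so every derivative of \<open>p0\<close> exists.\<close>
  have D: "((\<lambda>x. a0 x * p0 x + a1 x * p1 x + a2 x * p2 x) has_real_derivative
        (deriv a0 x + a2 x * f x) * p0 x + (a0 x + deriv a1 x) * p1 x + (a1 x + deriv a2 x) * p2 x) (at x)"
    if "smooth_real a0" "smooth_real a1" "smooth_real a2" for a0 a1 a2 x
    using that assms
    by (auto intro!: derivative_eq_intros smooth_real_has_derivative simp: algebra_simps)
  have combination: "differentiable_upto k (\<lambda>x. a0 x * p0 x + a1 x * p1 x + a2 x * p2 x)"
    if "smooth_real a0" "smooth_real a1" "smooth_real a2" for k a0 a1 a2
    using that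
  proof (induction k arbitrary: a0 a1 a2)
    case 0
    then show ?case using D[OF "0.prems"] by (auto simp: real_differentiable_def)
  next
    case (Suc k)
    have "deriv (\<lambda>x. a0 x * p0 x + a1 x * p1 x + a2 x * p2 x) =
        (\<lambda>x. (deriv a0 x + a2 x * f x) * p0 x + (a0 x + deriv a1 x) * p1 x + (a1 x + deriv a2 x) * p2 x)"
      using D[OF Suc.prems] by (intro ext DERIV_imp_deriv)
    moreover have "differentiable_upto k \<dots>"
      using Suc.prems assms(1)
      by (intro Suc.IH smooth_real_add smooth_real_mult smooth_real_deriv)
    ultimately show ?case using D[OF Suc.prems] by (auto simp: real_differentiable_def)
  qed
  have "differentiable_upto k (\<lambda>x. 1 * p0 x + 0 * p1 x + 0 * p2 x)" for k
    by (intro combination smooth_real_const)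
  then show ?thesis by (simp add: smooth_real_def)
qed

lemma third_order_eigenfunction_exists:
  fixes M :: "real \<Rightarrow> real"
  assumes "smooth_real M" "\<And>x. \<bar>M x\<bar> \<le> B"
  obtains \<psi> where "smooth_c \<psi>" "\<And>x. (cderiv ^^ 3) \<psi> x = of_real (M x) * \<psi> x" "\<psi> a = 1"
proof -
  obtain p0 p1 p2 where p0: "\<And>x. (p0 has_real_derivative p1 x) (at x)"
    and p1: "\<And>x. (p1 has_real_derivative p2 x) (at x)"
    and p2: "\<And>x. (p2 has_real_derivative M x * p0 x) (at x)" and "p0 a = 1"
    using third_order_linear_ode_solution[OF smooth_real_continuous_on[OF assms(1)] assms(2),
        where a = a] by blast
  have "smooth_real p0" by (rule third_order_solution_smooth[OF assms(1) p0 p1 p2])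
  have "deriv p0 = p1" "deriv p1 = p2" "deriv p2 = (\<lambda>x. M x * p0 x)"
    using p0 p1 p2 by (auto intro!: ext DERIV_imp_deriv)
  then have "(deriv ^^ 3) p0 x = M x * p0 x" for x by (simp add: numeral_eq_Suc)
  then have "(cderiv ^^ 3) (\<lambda>x. complex_of_real (p0 x)) x = of_real (M x) * of_real (p0 x)" for x
    by (simp add: cderiv_funpow_of_real[OF \<open>smooth_real p0\<close>])
  with smooth_c_of_real[OF \<open>smooth_real p0\<close>] \<open>p0 a = 1\<close> show ?thesis
    using that[of "\<lambda>x. complex_of_real (p0 x)"] by simp
qed

lemma has_vector_derivative_cderiv_funpow:
  "smooth_c \<psi> \<Longrightarrow> ((cderiv ^^ k) \<psi> has_vector_derivative (cderiv ^^ Suc k) \<psi> x) (at x)"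
  unfolding smooth_c_def cderiv_def by (simp add: vector_derivative_works)

lemma has_vector_derivative_of_real_deriv_funpow:
  "smooth_real g \<Longrightarrow>
    ((\<lambda>x. complex_of_real ((deriv ^^ k) g x)) has_vector_derivative of_real ((deriv ^^ Suc k) g x)) (at x)"
  by (auto intro!: has_vector_derivative_of_real smooth_real_has_derivative smooth_real_funpow_deriv)

lemma cderiv_eqI: "(\<And>x. (h has_vector_derivative h' x) (at x)) \<Longrightarrow> cderiv h = h'"
  unfolding cderiv_def by (intro ext vector_derivative_at)

lemma eigenfunction_higher_cderiv:
  fixes \<psi> M0 M1 M2 :: "real \<Rightarrow> complex"
  assumes "smooth_c \<psi>"
    and \<psi>3: "\<And>x. (cderiv ^^ 3) \<psi> x = - lam * M0 x * \<psi> x"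
    and M0: "\<And>x. (M0 has_vector_derivative M1 x) (at x)"
    and M1: "\<And>x. (M1 has_vector_derivative M2 x) (at x)"
  defines "P k \<equiv> (cderiv ^^ k) \<psi>"
  shows "P 4 = (\<lambda>x. - lam * (M0 x * P 1 x + M1 x * P 0 x))"
    and "P 5 = (\<lambda>x. - lam * (M0 x * P 2 x + 2 * M1 x * P 1 x + M2 x * P 0 x))"
proof -
  have P: "(P k has_vector_derivative P (Suc k) x) (at x)" for k x
    unfolding P_def using \<open>smooth_c \<psi>\<close> by (rule has_vector_derivative_cderiv_funpow)
  have "P 3 = (\<lambda>x. - lam * M0 x * P 0 x)"
    using \<psi>3 by (simp add: P_def fun_eq_iff)
  then have "P 4 = cderiv (\<lambda>x. - lam * M0 x * P 0 x)"
    by (simp add: P_def numeral_eq_Suc)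
  also have "\<dots> = (\<lambda>x. - lam * (M0 x * P 1 x + M1 x * P 0 x))"
    by (rule cderiv_eqI) (auto intro!: derivative_eq_intros P M0 simp: algebra_simps)
  finally show P4: "P 4 = \<dots>" .
  have "P 5 = cderiv (P 4)" by (simp add: P_def numeral_eq_Suc)
  also have "\<dots> = (\<lambda>x. - lam * (M0 x * P 2 x + 2 * M1 x * P 1 x + M2 x * P 0 x))"
    unfolding P4
    by (rule cderiv_eqI) (auto intro!: derivative_eq_intros P M0 M1 simp: algebra_simps numeral_2_eq_2)
  finally show "P 5 = \<dots>" .
qed

lemma lax_defect_identity:
  fixes g M :: "real \<Rightarrow> real" and lam :: complex and \<psi> :: "real \<Rightarrow> complex"
  assumes "smooth_real g" "smooth_real M"
    and M': "\<And>x. deriv M x = - (deriv ^^ 3) g x"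
    and "lam \<noteq> 0" "smooth_c \<psi>"
    and \<psi>3: "\<And>x. (cderiv ^^ 3) \<psi> x = - lam * of_real (M x) * \<psi> x"
    and W: "W = (\<lambda>x. - (1 / lam) * cderiv (cderiv \<psi>) x - of_real (g x) * cderiv \<psi> x
                      + of_real (deriv g x) * \<psi> x)"
  shows "(cderiv ^^ 3) W x - (- lam * of_real Mt * \<psi> x - lam * of_real (M x) * W x)
     = lam * of_real (Mt + g x * deriv M x + 3 * deriv g x * M x) * \<psi> x"
proof -
  define P where "P k = (cderiv ^^ k) \<psi>" for k
  define G where "G k x = complex_of_real ((deriv ^^ k) g x)" for k x
  have P: "(P k has_vector_derivative P (Suc k) x) (at x)" for k x
    unfolding P_def using \<open>smooth_c \<psi>\<close> by (rule has_vector_derivative_cderiv_funpow)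
  have G: "(G k has_vector_derivative G (Suc k) x) (at x)" for k x
    unfolding G_def using \<open>smooth_real g\<close> by (rule has_vector_derivative_of_real_deriv_funpow)
  have M0: "((\<lambda>x. of_real (M x)) has_vector_derivative - G 3 x) (at x)" for x
    using has_vector_derivative_of_real[OF smooth_real_has_derivative[OF \<open>smooth_real M\<close>]]
    by (simp add: M' G_def)
  have M1: "((\<lambda>x. - G 3 x) has_vector_derivative - G 4 x) (at x)" for x
    by (auto intro!: derivative_eq_intros G simp: numeral_eq_Suc)
  note P45 = eigenfunction_higher_cderiv[OF \<open>smooth_c \<psi>\<close> \<psi>3 M0 M1, folded P_def]
  have P3: "P 3 x = - lam * of_real (M x) * P 0 x" for x
    using \<psi>3 by (simp add: P_def)
  have "(cderiv ^^ 3) W = cderiv (cderiv (cderiv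
      (\<lambda>x. - (1 / lam) * P 2 x - G 0 x * P 1 x + G 1 x * P 0 x)))"
    unfolding W by (simp add: P_def G_def numeral_eq_Suc)
  also have "cderiv (\<lambda>x. - (1 / lam) * P 2 x - G 0 x * P 1 x + G 1 x * P 0 x)
      = (\<lambda>x. - (1 / lam) * P 3 x - G 0 x * P 2 x + G 2 x * P 0 x)"
    by (rule cderiv_eqI) (auto intro!: derivative_eq_intros P G simp: algebra_simps numeral_eq_Suc)
  also have "cderiv \<dots> = (\<lambda>x. - (1 / lam) * P 4 x - G 1 x * P 2 x - G 0 x * P 3 x
      + G 3 x * P 0 x + G 2 x * P 1 x)"
    by (rule cderiv_eqI) (auto intro!: derivative_eq_intros P G simp: algebra_simps numeral_eq_Suc)
  also have "cderiv \<dots> = (\<lambda>x. - (1 / lam) * P 5 x - 2 * G 1 x * P 3 x - G 0 x * P 4 x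
      + G 4 x * P 0 x + 2 * G 3 x * P 1 x)"
    by (rule cderiv_eqI) (auto intro!: derivative_eq_intros P G simp: algebra_simps numeral_eq_Suc)
  finally have W3x: "(cderiv ^^ 3) W x = - (1 / lam) * P 5 x - 2 * G 1 x * P 3 x - G 0 x * P 4 x
      + G 4 x * P 0 x + 2 * G 3 x * P 1 x" by simp
  have Wx: "W x = - (1 / lam) * P 2 x - G 0 x * P 1 x + G 1 x * P 0 x"
    unfolding W by (simp add: P_def G_def numeral_2_eq_2)
  have coefficient: "complex_of_real (Mt + g x * deriv M x + 3 * deriv g x * M x)
      = of_real Mt - G 0 x * G 3 x + 3 * G 1 x * of_real (M x)"
    by (simp add: G_def M')
  have "\<psi> x = P 0 x" by (simp add: P_def)
  then show ?thesis
    unfolding W3x Wx coefficient P45 P3 using \<open>lam \<noteq> 0\<close> by (simp add: field_simps)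
qed

lemma iter_partial_append: "iter_partial (bs @ cs) f = iter_partial bs (iter_partial cs f)"
  by (induction bs) auto

lemma smooth2_iter_partial: "smooth2 u \<Longrightarrow> smooth2 (iter_partial bs u)"
  unfolding smooth2_def by (simp flip: iter_partial_append)

lemma smooth2_pdx: "smooth2 u \<Longrightarrow> smooth2 (pdx u)"
  using smooth2_iter_partial[of u "[False]"] by simp

lemma smooth2_pdt: "smooth2 u \<Longrightarrow> smooth2 (pdt u)"
  using smooth2_iter_partial[of u "[True]"] by simp

lemma smooth2_continuous_on: "smooth2 u \<Longrightarrow> continuous_on UNIV (\<lambda>p. u (fst p) (snd p))"
  unfolding smooth2_def by (drule spec[of _ "[]"]) simp

lemma smooth2_has_derivative_x: "smooth2 u \<Longrightarrow> ((\<lambda>y. u t y) has_real_derivative pdx u t x) (at x)"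
  unfolding smooth2_def pdx_def
  by (drule spec[of _ "[]"]) (simp add: DERIV_deriv_iff_real_differentiable)

lemma smooth2_has_derivative_t: "smooth2 u \<Longrightarrow> ((\<lambda>s. u s x) has_real_derivative pdt u t x) (at t)"
  unfolding smooth2_def pdt_def
  by (drule spec[of _ "[]"]) (simp add: DERIV_deriv_iff_real_differentiable)

lemma smooth2_continuous_on_x: "smooth2 u \<Longrightarrow> continuous_on S (\<lambda>y. u t y)"
  by (meson DERIV_isCont continuous_at_imp_continuous_on smooth2_has_derivative_x)

lemma smooth_real_of_smooth2: "smooth2 u \<Longrightarrow> smooth_real (u t)"
proof -
  have "differentiable_upto k (u t)" if "smooth2 u" for k u
    using that
  proof (induction k arbitrary: u)
    case 0
    then show ?case
      using smooth2_has_derivative_x[of u t] by (auto simp: real_differentiable_def)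
  next
    case (Suc k)
    have "deriv (u t) = pdx u t" by (simp add: pdx_def fun_eq_iff)
    then show ?case
      using Suc smooth2_pdx smooth2_has_derivative_x[of u t]
      by (auto simp: real_differentiable_def)
  qed
  then show "smooth2 u \<Longrightarrow> smooth_real (u t)" by (simp add: smooth_real_def)
qed

lemma has_real_derivative_integral_param:
  assumes "smooth2 u"
  shows "((\<lambda>s. integral {a..b} (u s)) has_real_derivative integral {a..b} (pdt u t)) (at t)"
proof -
  have "((\<lambda>s. integral (cbox a b) (u s)) has_field_derivative integral (cbox a b) (pdt u t))
      (at t within UNIV)"
  proof (rule leibniz_rule_field_derivative[where fx="pdt u"])
    show "((\<lambda>s. u s y) has_field_derivative pdt u s y) (at s within UNIV)" for s y
      using smooth2_has_derivative_t[OF assms] by simp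
    show "u s integrable_on cbox a b" for s
      using smooth2_continuous_on_x[OF assms] by (auto intro!: integrable_continuous_real)
    show "continuous_on (UNIV \<times> cbox a b) (\<lambda>(s, y). pdt u s y)"
      using smooth2_continuous_on[OF smooth2_pdt[OF assms]]
      by (auto simp: split_beta intro: continuous_on_subset)
  qed auto
  then show ?thesis by simp
qed

lemma has_real_derivative_mean:
  "smooth2 u \<Longrightarrow> ((\<lambda>s. mean u s) has_real_derivative mean (pdt u) t) (at t)"
  unfolding mean_def using has_real_derivative_integral_param[of u 0 1 t] by simp

lemma pdt_pdx_commute:
  assumes "smooth2 u"
  shows "pdt (pdx u) t x = pdx (pdt u) t x"
proof -
  \<comment> \<open>Differentiate \<open>u s y = u s a + \<integral>\<^sub>a\<^sup>y u\<^sub>x s\<close> in \<open>s\<close> under the integral sign, then in \<open>y\<close>.\<close>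
  define a where "a = x - 1"
  have FTC: "u s y = u s a + integral {a..y} (pdx u s)" if "a \<le> y" for s y
  proof -
    have "(pdx u s has_integral (u s y - u s a)) {a..y}"
      using that smooth2_has_derivative_x[OF assms]
      by (intro fundamental_theorem_of_calculus)
        (auto simp: has_real_derivative_iff_has_vector_derivative[symmetric]
          intro: has_field_derivative_at_within)
    then show ?thesis by (simp add: integral_unique)
  qed
  have "((\<lambda>s. u s a + integral {a..y} (pdx u s)) has_real_derivative
      pdt u t a + integral {a..y} (pdt (pdx u) t)) (at t)" for y
    by (intro DERIV_add smooth2_has_derivative_t has_real_derivative_integral_param
        smooth2_pdx assms)
  then have pdt_u: "pdt u t y = pdt u t a + integral {a..y} (pdt (pdx u) t)" if "a \<le> y" for y
    using FTC[OF that] by (simp add: pdt_def DERIV_imp_deriv)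
  have "continuous_on UNIV (pdt (pdx u) t)"
    using smooth2_continuous_on_x[OF smooth2_pdt[OF smooth2_pdx[OF assms]]] by simp
  then have "((\<lambda>y. integral {a..y} (pdt (pdx u) t)) has_real_derivative pdt (pdx u) t x)
      (at x within {a..x+1})"
    by (intro integral_has_real_derivative) (auto simp: a_def intro: continuous_on_subset)
  then have "((\<lambda>y. pdt u t a + integral {a..y} (pdt (pdx u) t)) has_real_derivative
      pdt (pdx u) t x) (at x)"
    by (subst (asm) at_within_interior) (auto simp: a_def intro!: derivative_eq_intros)
  then have "((\<lambda>y. pdt u t y) has_real_derivative pdt (pdx u) t x) (at x)"
  proof (rule has_field_derivative_transform_within_open[where S="{a<..}"])
    show "pdt u t a + integral {a..y} (pdt (pdx u) t) = pdt u t y" if "y \<in> {a<..}" for y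
      by (rule pdt_u[symmetric]) (use that in auto)
  qed (auto simp: a_def)
  then show ?thesis unfolding pdx_def by (rule DERIV_imp_deriv[symmetric])
qed

lemma periodic_bounded:
  fixes g :: "real \<Rightarrow> real"
  assumes periodic: "\<And>y. g (y + 1) = g y" and "continuous_on UNIV g"
  shows "\<exists>B. \<forall>y. \<bar>g y\<bar> \<le> B"
proof -
  have "bounded (g ` {0..1})"
    by (intro compact_imp_bounded compact_continuous_image continuous_on_subset[OF assms(2)]) auto
  then obtain B where B: "\<And>z. z \<in> {0..1} \<Longrightarrow> \<bar>g z\<bar> \<le> B"
    unfolding bounded_iff by fastforce
  have shift: "g (y + of_int n) = g y" for y n
  proof (induction n rule: int_induct[where k=0])
    case (step1 i)
    then show ?case using periodic[of "y + of_int i"] by (simp add: add.assoc)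
  next
    case (step2 i)
    then show ?case using periodic[of "y + of_int (i - 1)"] by (simp add: add.assoc)
  qed simp
  have "\<bar>g y\<bar> \<le> B" for y
  proof -
    have "y - of_int \<lfloor>y\<rfloor> \<in> {0..1}"
      by (auto simp: floor_le_iff) linarith
    moreover have "g y = g (y - of_int \<lfloor>y\<rfloor>)"
      using shift[of "y - of_int \<lfloor>y\<rfloor>" "\<lfloor>y\<rfloor>"] by simp
    ultimately show ?thesis using B by simp
  qed
  then show ?thesis by blast
qed

lemma periodic_x_pdx:
  assumes "periodic_x u"
  shows "periodic_x (pdx u)"
  unfolding periodic_x_def
proof (intro allI)
  fix t x
  have "pdx u t (x + 1) = deriv (\<lambda>y. u t (y + 1)) x"
    unfolding pdx_def deriv_def DERIV_shift ..
  also have "(\<lambda>y. u t (y + 1)) = (\<lambda>y. u t y)"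
    using assms by (simp add: periodic_x_def)
  finally show "pdx u t (x + 1) = pdx u t x" by (simp add: pdx_def)
qed

lemma Vop_defect:
  fixes u m :: "real \<Rightarrow> real \<Rightarrow> real" and lam :: complex
  assumes "smooth2 u" "smooth_real (m t)"
    and m_deriv: "\<And>x. deriv (m t) x = - pdx (pdx (pdx u)) t x"
    and "lam \<noteq> 0" "smooth_c \<psi>"
    and \<psi>3: "\<And>x. (cderiv ^^ 3) \<psi> x = - lam * of_real (m t x) * \<psi> x"
  shows "(cderiv ^^ 3) (Vop u lam t \<psi>) x
      - (- lam * of_real (pdt m t x) * \<psi> x - lam * of_real (m t x) * Vop u lam t \<psi> x)
    = lam * of_real (pdt m t x + u t x * deriv (m t) x + 3 * pdx u t x * m t x) * \<psi> x"
proof -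
  have "deriv (m t) x = - (deriv ^^ 3) (u t) x" for x
    by (simp add: m_deriv pdx_def numeral_eq_Suc)
  then show ?thesis
    using lax_defect_identity[OF smooth_real_of_smooth2[OF \<open>smooth2 u\<close>] \<open>smooth_real (m t)\<close> _
        \<open>lam \<noteq> 0\<close> \<open>smooth_c \<psi>\<close> \<psi>3]
    by (simp add: Vop_def pdx_def fun_eq_iff)
qed

lemma lax_compatible_iff:
  fixes u m :: "real \<Rightarrow> real \<Rightarrow> real"
  assumes "smooth2 u"
    and m_smooth: "\<And>t. smooth_real (m t)"
    and m_bounded: "\<And>t. \<exists>B. \<forall>x. \<bar>m t x\<bar> \<le> B"
    and m_deriv: "\<And>t x. deriv (m t) x = - pdx (pdx (pdx u)) t x"
  shows "lax_compatible u m \<longleftrightarrow>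
    (\<forall>t x. pdt m t x + u t x * deriv (m t) x + 3 * pdx u t x * m t x = 0)"
proof
  assume equation: "\<forall>t x. pdt m t x + u t x * deriv (m t) x + 3 * pdx u t x * m t x = 0"
  show "lax_compatible u m"
    unfolding lax_compatible_def
  proof (intro allI impI)
    fix lam :: complex and t \<psi> x
    assume "lam \<noteq> 0" and "smooth_c \<psi> \<and> (\<forall>x. (cderiv ^^ 3) \<psi> x = - lam * of_real (m t x) * \<psi> x)"
    with Vop_defect[where m = m and t = t, OF \<open>smooth2 u\<close> m_smooth m_deriv, of lam \<psi> x] equation
    show "(cderiv ^^ 3) (Vop u lam t \<psi>) x
        = - lam * of_real (pdt m t x) * \<psi> x - lam * of_real (m t x) * Vop u lam t \<psi> x"
      by simp
  qed
next
  assume compatible: "lax_compatible u m"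
  show "\<forall>t x. pdt m t x + u t x * deriv (m t) x + 3 * pdx u t x * m t x = 0"
  proof (intro allI)
    fix t x0
    \<comment> \<open>Test the compatibility condition on an eigenfunction for \<open>\<lambda> = -1\<close> with \<open>\<psi>(x0) = 1\<close>.\<close>
    obtain B where "\<And>x. \<bar>m t x\<bar> \<le> B" using m_bounded by blast
    then obtain \<psi> where "smooth_c \<psi>" "\<psi> x0 = 1"
      and \<psi>3: "\<And>x. (cderiv ^^ 3) \<psi> x = - (-1) * of_real (m t x) * \<psi> x"
      using third_order_eigenfunction_exists[OF m_smooth] by (metis minus_minus mult_1)
    then have "(cderiv ^^ 3) (Vop u (-1) t \<psi>) x0
        - (- (-1) * of_real (pdt m t x0) * \<psi> x0 - (-1) * of_real (m t x0) * Vop u (-1) t \<psi> x0) = 0"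
      using compatible unfolding lax_compatible_def by (simp del: minus_minus mult_minus_left)
    then have "(-1) * of_real (pdt m t x0 + u t x0 * deriv (m t) x0 + 3 * pdx u t x0 * m t x0)
        * \<psi> x0 = 0"
      by (simp only: Vop_defect[where m = m and t = t, OF \<open>smooth2 u\<close> m_smooth m_deriv neg_one_neq_zero
          \<open>smooth_c \<psi>\<close> \<psi>3])
    with \<open>\<psi> x0 = 1\<close> show "pdt m t x0 + u t x0 * deriv (m t) x0 + 3 * pdx u t x0 * m t x0 = 0"
      by (simp only: mult_1_right mult_minus1 neg_equal_0_iff_equal of_real_eq_0_iff)
  qed
qed

lemma lax_compatible_iff_mu_family:
  fixes u :: "real \<Rightarrow> real \<Rightarrow> real"
  assumes u: "smooth2 u" "periodic_x u"
    and c: "\<And>t. (c has_real_derivative c' t) (at t)"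
  shows "lax_compatible u (\<lambda>t x. c t - pdx (pdx u) t x) \<longleftrightarrow>
    (\<forall>t x. c' t - pdx (pdx (pdt u)) t x + 3 * c t * pdx u t x
      - 3 * pdx u t x * pdx (pdx u) t x - u t x * pdx (pdx (pdx u)) t x = 0)"
proof -
  have u_xx: "smooth2 (pdx (pdx u))" "periodic_x (pdx (pdx u))"
    using u by (simp_all add: smooth2_pdx periodic_x_pdx)
  have "((\<lambda>x. c t - pdx (pdx u) t x) has_real_derivative 0 - pdx (pdx (pdx u)) t x) (at x)" for t x
    by (intro DERIV_diff DERIV_const smooth2_has_derivative_x u_xx(1))
  then have m_deriv: "deriv (\<lambda>x. c t - pdx (pdx u) t x) x = - pdx (pdx (pdx u)) t x" for t x
    by (simp add: DERIV_imp_deriv)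
  have "pdt (pdx u) = pdx (pdt u)"
    using pdt_pdx_commute[OF u(1)] by (simp add: fun_eq_iff)
  then have "pdt (pdx (pdx u)) t x = pdx (pdx (pdt u)) t x" for t x
    by (simp add: pdt_pdx_commute[OF smooth2_pdx[OF u(1)]])
  moreover have "((\<lambda>s. c s - pdx (pdx u) s x) has_real_derivative c' t - pdt (pdx (pdx u)) t x) (at t)"
    for t x
    by (intro DERIV_diff c smooth2_has_derivative_t u_xx(1))
  ultimately have m_pdt: "pdt (\<lambda>t x. c t - pdx (pdx u) t x) t x = c' t - pdx (pdx (pdt u)) t x"
    for t x
    by (simp add: pdt_def[of "\<lambda>t x. c t - pdx (pdx u) t x"] DERIV_imp_deriv)
  have bounded: "\<exists>B. \<forall>x. \<bar>c t - pdx (pdx u) t x\<bar> \<le> B" for t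
  proof -
    have "pdx (pdx u) t (y + 1) = pdx (pdx u) t y" for y
      using u_xx(2) by (simp add: periodic_x_def)
    then obtain B where B: "\<And>x. \<bar>pdx (pdx u) t x\<bar> \<le> B"
      using periodic_bounded[of "pdx (pdx u) t", OF _ smooth2_continuous_on_x[OF u_xx(1)]] by blast
    have "\<bar>c t - pdx (pdx u) t x\<bar> \<le> \<bar>c t\<bar> + B" for x
      using abs_triangle_ineq4[of "c t" "pdx (pdx u) t x"] B[of x] by linarith
    then show ?thesis by blast
  qed
  have smooth: "smooth_real (\<lambda>x. c t - pdx (pdx u) t x)" for t
    by (intro smooth_real_diff smooth_real_const smooth_real_of_smooth2[OF u_xx(1)])
  have "lax_compatible u (\<lambda>t x. c t - pdx (pdx u) t x) \<longleftrightarrow>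
      (\<forall>t x. pdt (\<lambda>t x. c t - pdx (pdx u) t x) t x
        + u t x * deriv (\<lambda>x. c t - pdx (pdx u) t x) x
        + 3 * pdx u t x * (c t - pdx (pdx u) t x) = 0)"
    by (rule lax_compatible_iff[OF u(1) smooth bounded m_deriv])
  also have "\<dots> \<longleftrightarrow> (\<forall>t x. c' t - pdx (pdx (pdt u)) t x + 3 * c t * pdx u t x
      - 3 * pdx u t x * pdx (pdx u) t x - u t x * pdx (pdx (pdx u)) t x = 0)"
    by (simp only: m_deriv m_pdt) (simp add: algebra_simps)
  finally show ?thesis .
qed

theorem theorem3p1:
  fixes u :: "real \<Rightarrow> real \<Rightarrow> real"
  assumes "smooth2 u" and "periodic_x u"
  shows "(lax_compatible u (\<lambda>t x. mean u t - pdx (pdx u) t x) \<longleftrightarrow>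
           (\<forall>t x. mean (pdt u) t - pdx (pdx (pdt u)) t x + 3 * mean u t * pdx u t x
                  - 3 * pdx u t x * pdx (pdx u) t x - u t x * pdx (pdx (pdx u)) t x = 0))
       \<and> (lax_compatible u (\<lambda>t x. - pdx (pdx u) t x) \<longleftrightarrow>
           (\<forall>t x. - pdx (pdx (pdt u)) t x
                  - 3 * pdx u t x * pdx (pdx u) t x - u t x * pdx (pdx (pdx u)) t x = 0))"
proof -
  have "lax_compatible u (\<lambda>t x. mean u t - pdx (pdx u) t x) \<longleftrightarrow>
      (\<forall>t x. mean (pdt u) t - pdx (pdx (pdt u)) t x + 3 * mean u t * pdx u t x
        - 3 * pdx u t x * pdx (pdx u) t x - u t x * pdx (pdx (pdx u)) t x = 0)"
    by (rule lax_compatible_iff_mu_family[OF assms has_real_derivative_mean[OF assms(1)]])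
  moreover have "lax_compatible u (\<lambda>t x. 0 - pdx (pdx u) t x) \<longleftrightarrow>
      (\<forall>t x. 0 - pdx (pdx (pdt u)) t x + 3 * 0 * pdx u t x
        - 3 * pdx u t x * pdx (pdx u) t x - u t x * pdx (pdx (pdx u)) t x = 0)"
    by (rule lax_compatible_iff_mu_family[OF assms DERIV_const])
  ultimately show ?thesis by simp
qed

end
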